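(* Let $\omega>0$, $S^1=[0,2\pi/\omega]$ with endpoints identified, and let $c$ be a smooth real $2\pi/\omega$-periodic function of the form $c(t)=2\sum_{n\ge1}\left(\frac{E_n}{(in\omega)^2}e^{in\omega t}+\frac{\overline{E_n}}{(-in\omega)^2}e^{-in\omega t}\right)$. For $\operatorname{Im}\sigma\ge0$ define $K_L(\sigma):L^2(S^1,dt)\to L^2(S^1,dt)$ by $$K_L(\sigma)f(t)=\sqrt{\tfrac{i}{\pi}}\int_0^{\infty}\left[\exp\!\left(i\frac{(c(t)-c(t-s))^2}{4s}\right)-1\right]e^{i\sigma s}f(t-s)\frac{ds}{\sqrt{s}} .$$ Then $K_L(\sigma)$ is compact for $\operatorname{Im}\sigma\ge0$, analytic in $\sigma$ for $\operatorname{Im}\sigma>0$, and has continuous limiting values at $\operatorname{Im}\sigma=0$.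
   Context: Functions on $S^1$ are extended periodically to $\mathbb{R}$ in the formula. *)

theory Defs
  imports "HOL-Analysis.Analysis"
begin

text \<open>L^2(S^1) with S^1 = [0,T], endpoints identified: functions on the reals that are
  T-periodic, Borel measurable and square integrable over one period.\<close>
definition L2S1 :: "real \<Rightarrow> (real \<Rightarrow> complex) set" where
  "L2S1 T = {f. (\<forall>t. f (t + T) = f t) \<and> f \<in> borel_measurable lborel \<and>
                set_integrable lborel {0..T} (\<lambda>t. (cmod (f t))^2)}"

definition L2norm :: "real \<Rightarrow> (real \<Rightarrow> complex) \<Rightarrow> real" where
  "L2norm T f = sqrt (LINT t:{0..T}|lborel. (cmod (f t))^2)"

definition KL :: "(real \<Rightarrow> real) \<Rightarrow> complex \<Rightarrow> (real \<Rightarrow> complex) \<Rightarrow> real \<Rightarrow> complex" where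
  "KL c \<sigma> f t = csqrt (\<i> / of_real pi) *
     (LINT s:{0<..}|lborel.
        (exp (\<i> * of_real ((c t - c (t - s))^2 / (4 * s))) - 1)
        * exp (\<i> * \<sigma> * of_real s) * f (t - s) / of_real (sqrt s))"

text \<open>Compact operator on L^2(S^1): linear map of L^2 into itself sending bounded
  sequences to sequences with an L^2-Cauchy (hence, by completeness, convergent) subsequence.\<close>
definition compact_op_L2 :: "real \<Rightarrow> ((real \<Rightarrow> complex) \<Rightarrow> real \<Rightarrow> complex) \<Rightarrow> bool" where
  "compact_op_L2 T A \<longleftrightarrow>
     (\<forall>f\<in>L2S1 T. A f \<in> L2S1 T) \<and>
     (\<forall>f\<in>L2S1 T. \<forall>g\<in>L2S1 T. \<forall>a::complex.
        L2norm T (\<lambda>t. A (\<lambda>x. a * f x + g x) t - (a * A f t + A g t)) = 0) \<and>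
     (\<forall>F.  (\<forall>n. F n \<in> L2S1 T) \<longrightarrow> (\<exists>B. \<forall>n. L2norm T (F n) \<le> B) \<longrightarrow>
        (\<exists>r::nat\<Rightarrow>nat. strict_mono r \<and>
           (\<forall>e>0. \<exists>N. \<forall>m\<ge>N. \<forall>n\<ge>N. L2norm T (\<lambda>t. A (F (r m)) t - A (F (r n)) t) < e)))"

text \<open>Operator-norm complex differentiability (= analyticity) of an operator family on U.\<close>
definition op_holomorphic_on ::
  "real \<Rightarrow> (complex \<Rightarrow> (real \<Rightarrow> complex) \<Rightarrow> real \<Rightarrow> complex) \<Rightarrow> complex set \<Rightarrow> bool" where
  "op_holomorphic_on T K U \<longleftrightarrow>
     (\<forall>\<sigma>\<in>U. \<exists>D. (\<forall>f\<in>L2S1 T. D f \<in> L2S1 T) \<and>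
        (\<exists>C. \<forall>f\<in>L2S1 T. L2norm T (D f) \<le> C * L2norm T f) \<and>
        (\<forall>e>0. \<exists>d>0. \<forall>h. h \<noteq> 0 \<and> cmod h < d \<longrightarrow>
           (\<forall>f\<in>L2S1 T. L2norm T (\<lambda>t. (K (\<sigma> + h) f t - K \<sigma> f t) / h - D f t) \<le> e * L2norm T f)))"

definition op_continuous_on ::
  "real \<Rightarrow> (complex \<Rightarrow> (real \<Rightarrow> complex) \<Rightarrow> real \<Rightarrow> complex) \<Rightarrow> complex set \<Rightarrow> bool" where
  "op_continuous_on T K S \<longleftrightarrow>
     (\<forall>\<sigma>0\<in>S. \<forall>e>0. \<exists>d>0. \<forall>\<sigma>\<in>S. cmod (\<sigma> - \<sigma>0) < d \<longrightarrow>
        (\<forall>f\<in>L2S1 T. L2norm T (\<lambda>t. K \<sigma> f t - K \<sigma>0 f t) \<le> e * L2norm T f))"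

end

theory Submission
  imports Defs "HOL-Complex_Analysis.Complex_Analysis"
begin

text \<open>For \<open>s > 0\<close> the integrand of \<open>K\<^sub>L(\<sigma>) f (t)\<close> is \<open>k(t, s) exp(i \<sigma> s) f(t - s)\<close> with
  \<open>k(t, s) = sqrt(i / \<pi>) (exp(i (c(t) - c(t - s))\<^sup>2 / (4 s)) - 1) / sqrt s\<close>.  As \<open>c\<close> is periodic
  and \<open>C\<^sup>1\<close>, \<open>\<bar>c(t) - c(t - s)\<bar> \<le> min (L s) (2 M)\<close>, so \<open>k\<close> is continuous, periodic in \<open>t\<close>,
  zero for \<open>s \<le> 0\<close> and \<open>O((1 + \<bar>s\<bar>) powr (-3/2))\<close>.

  For a kernel with these properties and decay exponent \<open>p > 1\<close>, Cauchy-Schwarz on each period,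
  summed over all periods, bounds the operator pointwise by a multiple of the \<open>L\<^sup>2\<close>-norm, and
  uniform continuity of the kernel on compacta makes the images of an \<open>L\<^sup>2\<close>-bounded set
  equicontinuous; so the operator is compact by Arzela-Ascoli.  Multiplying the kernel by
  \<open>exp(i \<sigma> s)\<close> with \<open>Im \<sigma> \<ge> 0\<close> keeps all bounds.  The remainder of the difference quotient
  in \<open>\<sigma>\<close> (for \<open>Im \<sigma> > 0\<close>) and the difference for nearby \<open>\<sigma>\<close> are again such kernels, with
  constants \<open>O(\<bar>h\<bar>)\<close> and \<open>O(\<bar>\<sigma> - \<sigma>\<^sub>0\<bar> powr \<theta>)\<close>; this gives analyticity and continuity in
  operator norm.\<close>

section \<open>Periodic square-integrable functions\<close>

lemma periodic_add_of_int_mult: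
  fixes T :: real
  assumes "\<forall>t. f (t + T) = f t"
  shows "f (x + of_int k * T) = f x"
proof -
  have shift_nat: "f (y + real n * T) = f y" for y n
  proof (induction n)
    case (Suc n)
    have "f (y + real (Suc n) * T) = f ((y + real n * T) + T)"
      by (simp add: algebra_simps)
    with Suc assms show ?case by simp
  qed simp
  show ?thesis
  proof (cases k rule: int_cases2)
    case (nonneg n)
    then show ?thesis by (simp add: shift_nat)
  next
    case (nonpos n)
    have "f (x + of_int k * T) = f ((x + of_int k * T) + real n * T)"
      by (rule shift_nat[symmetric])
    also have "\<dots> = f x" using nonpos by simp
    finally show ?thesis .
  qed
qed

lemma L2S1_D:
  assumes "f \<in> L2S1 T"
  shows "\<forall>t. f (t + T) = f t" "f \<in> borel_measurable borel"
    and "set_integrable lborel {0..T} (\<lambda>t. (cmod (f t))\<^sup>2)"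
  using assms unfolding L2S1_def by (auto simp: measurable_lborel1)

lemma borel_measurable_reflect:
  fixes f :: "real \<Rightarrow> 'a::topological_space"
  assumes "f \<in> borel_measurable borel"
  shows "(\<lambda>u. f (t - u)) \<in> borel_measurable borel"
proof -
  have "(\<lambda>u::real. t - u) \<in> borel_measurable borel"
    by (intro borel_measurable_continuous_onI continuous_intros)
  from measurable_compose[OF this assms] show ?thesis .
qed

lemma
  shows L2norm_sq: "(L2norm T f)\<^sup>2 = (LINT t:{0..T}|lborel. (cmod (f t))\<^sup>2)"
    and L2norm_nonneg: "0 \<le> L2norm T f"
proof -
  have "0 \<le> (LINT t:{0..T}|lborel. (cmod (f t))\<^sup>2)"
    unfolding set_lebesgue_integral_def
    by (rule integral_nonneg_AE) (auto split: split_indicator)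
  then show "(L2norm T f)\<^sup>2 = (LINT t:{0..T}|lborel. (cmod (f t))\<^sup>2)" "0 \<le> L2norm T f"
    unfolding L2norm_def by simp_all
qed

lemma nn_integral_sq_period:
  assumes "f \<in> L2S1 T"
  shows "(\<integral>\<^sup>+x. ennreal ((cmod (f x))\<^sup>2) * indicator {of_int k * T..of_int k * T + T} x \<partial>lborel)
       = ennreal ((L2norm T f)\<^sup>2)"
proof -
  note D = L2S1_D[OF assms]
  have shift: "f (of_int k * T + x) = f x" for x
    using periodic_add_of_int_mult[OF D(1), of x k] by (simp add: add.commute)
  have "(\<integral>\<^sup>+x. ennreal ((cmod (f x))\<^sup>2) * indicator {of_int k * T..of_int k * T + T} x \<partial>lborel)
    = ennreal \<bar>1\<bar> * (\<integral>\<^sup>+x. ennreal ((cmod (f (of_int k * T + 1 * x)))\<^sup>2)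
        * indicator {of_int k * T..of_int k * T + T} (of_int k * T + 1 * x) \<partial>lborel)"
    using D(2) by (intro nn_integral_real_affine) simp_all
  also have "\<dots> = (\<integral>\<^sup>+x. ennreal (indicator {0..T} x *\<^sub>R (cmod (f x))\<^sup>2) \<partial>lborel)"
    by (simp add: shift) (intro nn_integral_cong; simp split: split_indicator)
  also have "\<dots> = ennreal (LINT t:{0..T}|lborel. (cmod (f t))\<^sup>2)"
    using D(3) unfolding set_lebesgue_integral_def set_integrable_def
    by (intro nn_integral_eq_integral) auto
  finally show ?thesis by (simp add: L2norm_sq)
qed

lemma nn_integral_sq_interval_le:
  assumes "f \<in> L2S1 T" "0 < T"
  shows "(\<integral>\<^sup>+x. ennreal ((cmod (f x))\<^sup>2) * indicator {a..a + T} x \<partial>lborel)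
       \<le> 2 * ennreal ((L2norm T f)\<^sup>2)"
proof -
  note D = L2S1_D[OF assms(1)]
  define n where "n = \<lfloor>a / T\<rfloor>"
  have "of_int n \<le> a / T" "a / T < of_int n + 1"
    unfolding n_def by linarith+
  then have n: "of_int n * T \<le> a" "a < of_int n * T + T"
    using assms(2) by (simp_all add: le_divide_eq divide_less_eq algebra_simps)
  have cover: "indicator {a..a + T} x
      \<le> indicator {of_int n * T..of_int n * T + T} x
       + (indicator {of_int (n + 1) * T..of_int (n + 1) * T + T} x :: ennreal)" for x
    using n by (auto simp: algebra_simps split: split_indicator)
  have "(\<integral>\<^sup>+x. ennreal ((cmod (f x))\<^sup>2) * indicator {a..a + T} x \<partial>lborel)
     \<le> (\<integral>\<^sup>+x. ennreal ((cmod (f x))\<^sup>2) * indicator {of_int n * T..of_int n * T + T} x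
        + ennreal ((cmod (f x))\<^sup>2) * indicator {of_int (n + 1) * T..of_int (n + 1) * T + T} x \<partial>lborel)"
    using cover by (intro nn_integral_mono) (simp add: distrib_left[symmetric] mult_left_mono)
  also have "\<dots> = (\<integral>\<^sup>+x. ennreal ((cmod (f x))\<^sup>2) * indicator {of_int n * T..of_int n * T + T} x \<partial>lborel)
      + (\<integral>\<^sup>+x. ennreal ((cmod (f x))\<^sup>2) * indicator {of_int (n + 1) * T..of_int (n + 1) * T + T} x \<partial>lborel)"
    using D(2) by (intro nn_integral_add) simp_all
  also have "\<dots> = ennreal ((L2norm T f)\<^sup>2) + ennreal ((L2norm T f)\<^sup>2)"
    by (simp only: nn_integral_sq_period[OF assms(1)])
  finally show ?thesis by (simp add: mult_2)
qed

lemma ennreal_le_if_sq_le: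
  assumes "X\<^sup>2 \<le> ennreal (r\<^sup>2)" "0 \<le> r"
  shows "X \<le> ennreal r"
proof (cases X)
  case (real x)
  with assms(1) have "ennreal (x\<^sup>2) \<le> ennreal (r\<^sup>2)"
    by (simp add: ennreal_power)
  with assms(2) have "x\<^sup>2 \<le> r\<^sup>2"
    by (subst (asm) ennreal_le_iff) auto
  with real assms(2) have "x \<le> r"
    by (meson power2_le_imp_le)
  with real show ?thesis
    by (simp add: ennreal_leI)
next
  case top
  with assms(1) show ?thesis by (simp add: top_unique)
qed

lemma nn_integral_norm_interval_le:
  assumes "f \<in> L2S1 T" "0 < T"
  shows "(\<integral>\<^sup>+x. ennreal (cmod (f x)) * indicator {a..a + T} x \<partial>lborel)
       \<le> ennreal (sqrt (2 * T) * L2norm T f)"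
proof -
  note D = L2S1_D[OF assms(1)]
  define X where "X = (\<integral>\<^sup>+x. ennreal (cmod (f x)) * indicator {a..a + T} x \<partial>lborel)"
  have "X\<^sup>2 = (\<integral>\<^sup>+x. (ennreal (cmod (f x)) * indicator {a..a + T} x) * indicator {a..a + T} x \<partial>lborel)\<^sup>2"
    unfolding X_def by (intro arg_cong[where f="\<lambda>x. x\<^sup>2"] nn_integral_cong) (auto split: split_indicator)
  also have "\<dots> \<le> (\<integral>\<^sup>+x. (ennreal (cmod (f x)) * indicator {a..a + T} x)\<^sup>2 \<partial>lborel)
                  * (\<integral>\<^sup>+x. (indicator {a..a + T} x)\<^sup>2 \<partial>lborel)"
    using D(2) by (intro Cauchy_Schwarz_nn_integral) simp_all
  also have "(\<integral>\<^sup>+x. (ennreal (cmod (f x)) * indicator {a..a + T} x)\<^sup>2 \<partial>lborel)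
      = (\<integral>\<^sup>+x. ennreal ((cmod (f x))\<^sup>2) * indicator {a..a + T} x \<partial>lborel)"
    by (intro nn_integral_cong) (auto split: split_indicator simp: ennreal_power)
  also have "(\<integral>\<^sup>+x. (indicator {a..a + T} x)\<^sup>2 \<partial>lborel) = (\<integral>\<^sup>+x. indicator {a..a + T} x \<partial>lborel)"
    by (intro nn_integral_cong) (simp split: split_indicator)
  also have "\<dots> = ennreal T"
    using assms(2) by simp
  also have "(\<integral>\<^sup>+x. ennreal ((cmod (f x))\<^sup>2) * indicator {a..a + T} x \<partial>lborel) * ennreal T
      \<le> 2 * ennreal ((L2norm T f)\<^sup>2) * ennreal T"
    by (intro mult_right_mono nn_integral_sq_interval_le[OF assms]) auto
  also have "\<dots> = ennreal ((sqrt (2 * T) * L2norm T f)\<^sup>2)"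
    using assms(2) by (simp add: ennreal_mult power_mult_distrib mult_ac)
  finally have "X\<^sup>2 \<le> ennreal ((sqrt (2 * T) * L2norm T f)\<^sup>2)" .
  moreover have "0 \<le> sqrt (2 * T) * L2norm T f"
    using L2norm_nonneg[of T f] assms(2) by simp
  ultimately show ?thesis
    unfolding X_def by (rule ennreal_le_if_sq_le)
qed

lemma nn_integral_norm_reflected_interval_le:
  assumes "f \<in> L2S1 T" "0 < T"
  shows "(\<integral>\<^sup>+u. ennreal (cmod (f (t - u))) * indicator {b..b + T} u \<partial>lborel)
       \<le> ennreal (sqrt (2 * T) * L2norm T f)"
proof -
  note D = L2S1_D[OF assms(1)]
  have reflect: "indicator {t - b - T..t - b} (t - u) = (indicator {b..b + T} u :: ennreal)" for u
    by (auto simp: indicator_def)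
  have "(\<integral>\<^sup>+x. ennreal (cmod (f x)) * indicator {t - b - T..(t - b - T) + T} x \<partial>lborel)
      = ennreal \<bar>-1\<bar> * (\<integral>\<^sup>+u. ennreal (cmod (f (t + (-1) * u)))
          * indicator {t - b - T..(t - b - T) + T} (t + (-1) * u) \<partial>lborel)"
    using D(2) by (intro nn_integral_real_affine) simp_all
  also have "\<dots> = (\<integral>\<^sup>+u. ennreal (cmod (f (t - u))) * indicator {b..b + T} u \<partial>lborel)"
    by (simp add: reflect)
  finally show ?thesis
    using nn_integral_norm_interval_le[OF assms, of "t - b - T"] by simp
qed

section \<open>Convolution with a polynomially decaying weight\<close>

definition decay :: "real \<Rightarrow> real \<Rightarrow> real" where
  "decay p u = (1 + \<bar>u\<bar>) powr (- p)"

lemma decay_pos: "0 < decay p u"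
  unfolding decay_def by simp

lemma borel_measurable_decay [measurable]: "decay p \<in> borel_measurable borel"
proof (rule borel_measurable_continuous_onI)
  show "continuous_on UNIV (decay p)"
    unfolding decay_def by (intro continuous_intros) (auto simp: add_pos_nonneg)
qed

lemma decay_bound_nonneg: "cmod z \<le> C * decay p u \<Longrightarrow> 0 \<le> C"
  using decay_pos[of p u] by (smt (verit) norm_ge_zero zero_le_mult_iff)

text \<open>On \<open>\<plusminus>[m T, (m + 1) T]\<close> the weight is at most \<open>(1 + m T) powr - p\<close>, and the
  \<open>L\<^sup>1\<close>-norm of a periodic function there is at most \<open>sqrt (2 T)\<close> times its \<open>L\<^sup>2\<close>-norm.\<close>
definition decay_conv_const :: "real \<Rightarrow> real \<Rightarrow> real" where
  "decay_conv_const p T = 2 * sqrt (2 * T) * (\<Sum>m. (1 + real m * T) powr (- p))"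

lemma summable_decay_grid:
  assumes "0 < T" "1 < p"
  shows "summable (\<lambda>m. (1 + real m * T) powr (- p))"
proof -
  define k where "k = min 1 T"
  have k: "0 < k" "k \<le> 1" "k \<le> T"
    using assms unfolding k_def by auto
  have "summable (\<lambda>m. real (Suc m) powr (- p))"
    using assms(2) by (subst summable_Suc_iff) (simp add: summable_real_powr_iff)
  then have "summable (\<lambda>m. k powr (- p) * real (Suc m) powr (- p))"
    by (rule summable_mult)
  then show ?thesis
  proof (rule summable_comparison_test')
    fix m :: nat
    have "k * real (Suc m) \<le> 1 + real m * T"
      using k mult_right_mono[OF k(3), of "real m"] by (simp add: algebra_simps)
    then have "(1 + real m * T) powr (- p) \<le> (k * real (Suc m)) powr (- p)"
      using k assms by (intro powr_mono2') auto
    then show "norm ((1 + real m * T) powr (- p)) \<le> k powr (- p) * real (Suc m) powr (- p)"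
      using k by (simp add: powr_mult)
  qed
qed

lemma decay_conv_const_nonneg: "0 < T \<Longrightarrow> 1 < p \<Longrightarrow> 0 \<le> decay_conv_const p T"
  unfolding decay_conv_const_def
  by (intro mult_nonneg_nonneg suminf_nonneg summable_decay_grid) auto

lemma nn_integral_decay_conv_le:
  assumes "f \<in> L2S1 T" "0 < T" "1 < p"
  shows "(\<integral>\<^sup>+u. ennreal (decay p u * cmod (f (t - u))) \<partial>lborel)
       \<le> ennreal (decay_conv_const p T * L2norm T f)"
proof -
  note D = L2S1_D[OF assms(1)]
  note [measurable] = borel_measurable_reflect[OF D(2), of t]
  define a where "a m = (1 + real m * T) powr (- p)" for m :: nat
  define G where "G m u = ennreal (a m) * (ennreal (cmod (f (t - u))) * indicator {real m * T..real m * T + T} u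
      + ennreal (cmod (f (t - u))) * indicator {- (real m * T) - T..(- (real m * T) - T) + T} u)" for m u
  have pointwise: "ennreal (decay p u * cmod (f (t - u))) \<le> (\<Sum>m. G m u)" for u
  proof -
    define m where "m = nat \<lfloor>\<bar>u\<bar> / T\<rfloor>"
    have "real m = of_int \<lfloor>\<bar>u\<bar> / T\<rfloor>"
      using assms(2) unfolding m_def by simp
    then have "real m \<le> \<bar>u\<bar> / T" "\<bar>u\<bar> / T < real m + 1"
      by linarith+
    then have m: "real m * T \<le> \<bar>u\<bar>" "\<bar>u\<bar> < real m * T + T"
      using assms(2) by (simp_all add: le_divide_eq divide_less_eq algebra_simps)
    have "decay p u \<le> a m"
      unfolding decay_def a_def using m assms by (intro powr_mono2') (auto simp: add_pos_nonneg)
    then have "ennreal (decay p u * cmod (f (t - u))) \<le> ennreal (a m) * ennreal (cmod (f (t - u)))"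
      by (simp add: ennreal_mult[symmetric] ennreal_leI mult_right_mono a_def)
    also have "\<dots> \<le> G m u"
      unfolding G_def using m
      by (intro mult_left_mono) (auto simp: indicator_def)
    also have "\<dots> \<le> (\<Sum>m. G m u)"
      using sum_le_suminf[of "\<lambda>m. G m u" "{m}"] by auto
    finally show ?thesis .
  qed
  have "(\<integral>\<^sup>+u. ennreal (decay p u * cmod (f (t - u))) \<partial>lborel) \<le> (\<integral>\<^sup>+u. (\<Sum>m. G m u) \<partial>lborel)"
    by (intro nn_integral_mono pointwise)
  also have "\<dots> = (\<Sum>m. \<integral>\<^sup>+u. G m u \<partial>lborel)"
    unfolding G_def by (intro nn_integral_suminf) measurable
  also have "\<dots> \<le> (\<Sum>m. ennreal (a m * (2 * sqrt (2 * T) * L2norm T f)))"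
  proof (intro suminf_le summableI)
    fix m
    have "(\<integral>\<^sup>+u. G m u \<partial>lborel)
      = ennreal (a m) * ((\<integral>\<^sup>+u. ennreal (cmod (f (t - u))) * indicator {real m * T..real m * T + T} u \<partial>lborel)
        + (\<integral>\<^sup>+u. ennreal (cmod (f (t - u))) * indicator {- (real m * T) - T..(- (real m * T) - T) + T} u \<partial>lborel))"
      unfolding G_def by (subst nn_integral_cmult; (subst nn_integral_add)?; measurable?; simp?)
    also have "\<dots> \<le> ennreal (a m) * (ennreal (sqrt (2 * T) * L2norm T f) + ennreal (sqrt (2 * T) * L2norm T f))"
      by (intro mult_left_mono add_mono nn_integral_norm_reflected_interval_le[OF assms(1,2)]) auto
    also have "\<dots> = ennreal (a m * (2 * sqrt (2 * T) * L2norm T f))"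
      using L2norm_nonneg[of T f] assms(2) unfolding a_def
      by (simp add: ennreal_mult'[symmetric] ennreal_plus[symmetric] del: ennreal_plus)
    finally show "(\<integral>\<^sup>+u. G m u \<partial>lborel) \<le> ennreal (a m * (2 * sqrt (2 * T) * L2norm T f))" .
  qed
  also have "\<dots> = ennreal (\<Sum>m. a m * (2 * sqrt (2 * T) * L2norm T f))"
    using summable_decay_grid[OF assms(2,3)] L2norm_nonneg[of T f] assms(2) unfolding a_def
    by (intro suminf_ennreal2) (auto intro: summable_mult2)
  also have "(\<Sum>m. a m * (2 * sqrt (2 * T) * L2norm T f)) = decay_conv_const p T * L2norm T f"
    using summable_decay_grid[OF assms(2,3)] unfolding a_def decay_conv_const_def
    by (subst suminf_mult2[symmetric]) (auto simp: mult_ac)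
  finally show ?thesis .
qed

section \<open>Operators with continuous, polynomially decaying kernels\<close>

definition kernel_op :: "(real \<Rightarrow> real \<Rightarrow> complex) \<Rightarrow> (real \<Rightarrow> complex) \<Rightarrow> real \<Rightarrow> complex" where
  "kernel_op h f t = (\<integral>s. h t s * f (t - s) \<partial>lborel)"

lemma
  assumes f: "f \<in> L2S1 T" and T: "0 < T" and p: "1 < p"
    and [measurable]: "h t \<in> borel_measurable borel"
    and bound: "\<And>s. cmod (h t s) \<le> C * decay p s"
  shows integrable_kernel_op: "integrable lborel (\<lambda>s. h t s * f (t - s))"
    and norm_kernel_op_le: "cmod (kernel_op h f t) \<le> C * decay_conv_const p T * L2norm T f"
proof -
  note [measurable] = borel_measurable_reflect[OF L2S1_D(2)[OF f], of t]
  have C: "0 \<le> C"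
    using decay_bound_nonneg[OF bound] .
  have "norm (h t s * f (t - s)) \<le> C * (decay p s * cmod (f (t - s)))" for s
    using bound[of s] by (metis mult.assoc mult_right_mono norm_ge_zero norm_mult)
  then have "(\<integral>\<^sup>+s. ennreal (norm (h t s * f (t - s))) \<partial>lborel)
      \<le> (\<integral>\<^sup>+s. ennreal C * ennreal (decay p s * cmod (f (t - s))) \<partial>lborel)"
    using C by (intro nn_integral_mono) (simp add: ennreal_mult'[symmetric] ennreal_leI)
  also have "\<dots> = ennreal C * (\<integral>\<^sup>+s. ennreal (decay p s * cmod (f (t - s))) \<partial>lborel)"
    by (intro nn_integral_cmult) measurable
  also have "\<dots> \<le> ennreal C * ennreal (decay_conv_const p T * L2norm T f)"
    by (intro mult_left_mono nn_integral_decay_conv_le[OF f T p]) auto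
  also have "\<dots> = ennreal (C * decay_conv_const p T * L2norm T f)"
    using C by (simp add: ennreal_mult'[symmetric] mult.assoc)
  finally have bound_int: "(\<integral>\<^sup>+s. ennreal (norm (h t s * f (t - s))) \<partial>lborel)
      \<le> ennreal (C * decay_conv_const p T * L2norm T f)" .
  show int: "integrable lborel (\<lambda>s. h t s * f (t - s))"
    unfolding integrable_iff_bounded using bound_int
    by (auto simp: top_unique less_top[symmetric] dest: order.strict_trans1)
  have "ennreal (cmod (kernel_op h f t)) \<le> (\<integral>\<^sup>+s. ennreal (norm (h t s * f (t - s))) \<partial>lborel)"
    unfolding kernel_op_def by (rule integral_norm_bound_ennreal[OF int])
  also note bound_int
  finally show "cmod (kernel_op h f t) \<le> C * decay_conv_const p T * L2norm T f"
    using decay_conv_const_nonneg[OF T p] L2norm_nonneg[of T f] C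
    by (subst (asm) ennreal_le_iff) auto
qed

lemma divide_plus_one_pos: "0 < e \<Longrightarrow> 0 \<le> A \<Longrightarrow> 0 < e / (A + 1 :: real)"
  by simp

lemma divide_plus_one_mult_less: "0 < e \<Longrightarrow> 0 \<le> A \<Longrightarrow> e / (A + 1) * A < (e :: real)"
  by (simp add: field_simps)

lemma L2norm_le_bound:
  assumes "0 \<le> T" "\<And>t. t \<in> {0..T} \<Longrightarrow> cmod (F t) \<le> B"
  shows "L2norm T F \<le> sqrt T * B"
proof -
  have B: "0 \<le> B"
    using assms(2)[of 0] assms(1) by (meson atLeastAtMost_iff norm_ge_zero order.trans order.refl)
  have "(\<integral>\<^sup>+t. ennreal (indicator {0..T} t *\<^sub>R (cmod (F t))\<^sup>2) \<partial>lborel)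
      \<le> (\<integral>\<^sup>+t. ennreal (B\<^sup>2) * indicator {0..T} t \<partial>lborel)"
    using assms(2) by (intro nn_integral_mono) (auto simp: ennreal_leI power_mono split: split_indicator)
  also have "\<dots> = ennreal (B\<^sup>2) * emeasure lborel {0..T}"
    by (rule nn_integral_cmult_indicator) simp
  also have "\<dots> = ennreal (B\<^sup>2 * T)"
    using assms(1) by (simp add: ennreal_mult)
  finally have "(LINT t:{0..T}|lborel. (cmod (F t))\<^sup>2) \<le> B\<^sup>2 * T"
    unfolding set_lebesgue_integral_def using assms(1) by (intro integral_real_bounded) auto
  then have "L2norm T F \<le> sqrt (B\<^sup>2 * T)"
    unfolding L2norm_def by simp
  also have "\<dots> = sqrt T * B"
    using B by (simp add: real_sqrt_mult)
  finally show ?thesis .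
qed

lemma L2norm_Cauchy_if_uniform_limit:
  assumes "0 \<le> T"
    and lim: "\<And>e. 0 < e \<Longrightarrow> \<exists>N. \<forall>n x. n \<ge> N \<and> x \<in> {0..T} \<longrightarrow> norm (F n x - g x) < e"
  shows "\<forall>e>0. \<exists>N. \<forall>m\<ge>N. \<forall>n\<ge>N. L2norm T (\<lambda>t. F m t - F n t) < e"
proof (intro allI impI)
  fix e :: real
  assume e: "0 < e"
  have sqrt_T: "0 \<le> 2 * sqrt T"
    using assms(1) by simp
  define e' where "e' = e / (2 * sqrt T + 1)"
  have e': "0 < e'" "sqrt T * (2 * e') < e"
    using divide_plus_one_pos[OF e sqrt_T] divide_plus_one_mult_less[OF e sqrt_T]
    unfolding e'_def by (simp_all add: mult_ac)
  obtain N where N: "\<And>n x. n \<ge> N \<Longrightarrow> x \<in> {0..T} \<Longrightarrow> norm (F n x - g x) < e'"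
    using lim[OF e'(1)] by blast
  have "L2norm T (\<lambda>t. F m t - F n t) < e" if "m \<ge> N" "n \<ge> N" for m n
  proof -
    have "L2norm T (\<lambda>t. F m t - F n t) \<le> sqrt T * (2 * e')"
    proof (rule L2norm_le_bound[OF assms(1)])
      fix t :: real
      assume t: "t \<in> {0..T}"
      have "cmod (F m t - F n t) \<le> norm (F m t - g t) + norm (F n t - g t)"
        using norm_triangle_ineq4[of "F m t - g t" "F n t - g t"] by simp
      also have "\<dots> \<le> 2 * e'"
        using N[OF that(1) t] N[OF that(2) t] by simp
      finally show "cmod (F m t - F n t) \<le> 2 * e'" .
    qed
    with e'(2) show ?thesis by linarith
  qed
  then show "\<exists>N. \<forall>m\<ge>N. \<forall>n\<ge>N. L2norm T (\<lambda>t. F m t - F n t) < e"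
    by blast
qed

locale decaying_kernel =
  fixes T p C :: real and h :: "real \<Rightarrow> real \<Rightarrow> complex"
  assumes period_pos: "0 < T"
    and exponent_gt_one: "1 < p"
    and continuous_kernel: "continuous_on UNIV (\<lambda>z. h (fst z) (snd z))"
    and periodic_kernel: "\<And>t s. h (t + T) s = h t s"
    and kernel_bound: "\<And>t s. cmod (h t s) \<le> C * decay p s"
begin

lemma bound_nonneg: "0 \<le> C"
  using decay_bound_nonneg[OF kernel_bound] .

lemma continuous_on_kernel_section: "continuous_on UNIV (h t)"
proof -
  have "continuous_on UNIV (\<lambda>s. (\<lambda>z. h (fst z) (snd z)) (t, s))"
    by (rule continuous_on_compose2[OF continuous_kernel]) (auto intro: continuous_intros)
  then show ?thesis
    by simp
qed

lemma borel_measurable_kernel [measurable]: "h t \<in> borel_measurable borel"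
  by (rule borel_measurable_continuous_onI[OF continuous_on_kernel_section])

lemma kernel_op_integrable: "f \<in> L2S1 T \<Longrightarrow> integrable lborel (\<lambda>s. h t s * f (t - s))"
  by (rule integrable_kernel_op[OF _ period_pos exponent_gt_one borel_measurable_kernel kernel_bound])

lemma norm_kernel_op_bound:
  "f \<in> L2S1 T \<Longrightarrow> cmod (kernel_op h f t) \<le> C * decay_conv_const p T * L2norm T f"
  by (rule norm_kernel_op_le[OF _ period_pos exponent_gt_one borel_measurable_kernel kernel_bound])

lemma L2norm_kernel_op_bound:
  assumes "f \<in> L2S1 T"
  shows "L2norm T (kernel_op h f) \<le> sqrt T * C * decay_conv_const p T * L2norm T f"
  using L2norm_le_bound[of T "kernel_op h f"] norm_kernel_op_bound[OF assms] period_pos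
  by (simp add: mult.assoc)

lemma kernel_tail_bound:
  assumes "0 \<le> q" "q \<le> p" "1 \<le> R" "R < \<bar>u\<bar>" "\<bar>v - u\<bar> \<le> 1"
  shows "cmod (h t' v - h t u) \<le> 2 powr (q + 1) * C * R powr (q - p) * decay q u"
proof -
  have u: "0 < \<bar>u\<bar>"
    using assms by linarith
  have decay_v: "decay p v \<le> \<bar>u\<bar> powr (- p)" and decay_u: "decay p u \<le> \<bar>u\<bar> powr (- p)"
    unfolding decay_def using assms exponent_gt_one u by (auto intro!: powr_mono2')
  have "\<bar>u\<bar> powr (- q) = 2 powr q * (2 * \<bar>u\<bar>) powr (- q)"
    using u by (simp add: powr_mult powr_minus field_simps)
  also have "\<dots> \<le> 2 powr q * decay q u"
    unfolding decay_def using assms by (intro mult_left_mono powr_mono2') auto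
  finally have u_q: "\<bar>u\<bar> powr (- q) \<le> 2 powr q * decay q u" .
  have "cmod (h t' v - h t u) \<le> C * decay p v + C * decay p u"
    by (intro order_trans[OF norm_triangle_ineq4] add_mono kernel_bound)
  also have "\<dots> \<le> C * \<bar>u\<bar> powr (- p) + C * \<bar>u\<bar> powr (- p)"
    using decay_v decay_u bound_nonneg by (intro add_mono mult_left_mono)
  also have "\<dots> = 2 * C * (\<bar>u\<bar> powr (q - p) * \<bar>u\<bar> powr (- q))"
    using u by (simp add: powr_add[symmetric])
  also have "\<dots> \<le> 2 * C * (R powr (q - p) * (2 powr q * decay q u))"
    using assms u_q bound_nonneg
    by (intro mult_left_mono mult_mono powr_mono2') auto
  also have "\<dots> = 2 powr (q + 1) * C * R powr (q - p) * decay q u"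
    by (simp add: powr_add mult_ac)
  finally show ?thesis .
qed

text \<open>Continuity of \<open>h\<close> on a compact rectangle handles \<open>\<bar>u\<bar> \<le> R\<close>; the surplus decay
  \<open>p - q\<close> makes the tail \<open>\<bar>u\<bar> > R\<close> small.\<close>
lemma kernel_shift_estimate:
  assumes "0 \<le> q" "q < p" "0 < \<epsilon>"
  obtains d where "0 < d"
    and "\<And>t u. \<bar>t - t0\<bar> < d \<Longrightarrow> cmod (h t (t - t0 + u) - h t0 u) \<le> \<epsilon> * decay q u"
proof -
  have "((\<lambda>R. 2 powr (q + 1) * C * R powr (q - p)) \<longlongrightarrow> 2 powr (q + 1) * C * 0) at_top"
    using assms by (intro tendsto_mult_left tendsto_neg_powr filterlim_ident) auto
  then have "eventually (\<lambda>R. 2 powr (q + 1) * C * R powr (q - p) < \<epsilon>) at_top"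
    using assms(3) by (simp add: order_tendstoD)
  then obtain R0 where R0: "\<And>R. R \<ge> R0 \<Longrightarrow> 2 powr (q + 1) * C * R powr (q - p) < \<epsilon>"
    by (auto simp: eventually_at_top_linorder)
  define R where "R = max 1 R0"
  have R: "1 \<le> R" "2 powr (q + 1) * C * R powr (q - p) < \<epsilon>"
    using R0 unfolding R_def by auto
  define \<eta> where "\<eta> = \<epsilon> * (1 + R) powr (- q)"
  have \<eta>: "0 < \<eta>"
    using assms R unfolding \<eta>_def by simp
  define K where "K = {t0 - 1..t0 + 1} \<times> {- R - 1..R + 1}"
  have "uniformly_continuous_on K (\<lambda>z. h (fst z) (snd z))"
    unfolding K_def
    by (intro compact_uniformly_continuous continuous_on_subset[OF continuous_kernel] compact_Times) auto
  then obtain \<delta> where \<delta>: "0 < \<delta>"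
    and uc: "\<And>x x'. x \<in> K \<Longrightarrow> x' \<in> K \<Longrightarrow> dist x' x < \<delta> \<Longrightarrow>
      dist (h (fst x') (snd x')) (h (fst x) (snd x)) < \<eta>"
    unfolding uniformly_continuous_on_def using \<eta> by metis
  show ?thesis
  proof (rule that[of "min 1 (\<delta> / 2)"])
    show "0 < min 1 (\<delta> / 2)"
      using \<delta> by simp
    fix t u
    assume "\<bar>t - t0\<bar> < min 1 (\<delta> / 2)"
    then have near: "\<bar>t - t0\<bar> < 1" "2 * \<bar>t - t0\<bar> < \<delta>"
      by auto
    show "cmod (h t (t - t0 + u) - h t0 u) \<le> \<epsilon> * decay q u"
    proof (cases "\<bar>u\<bar> \<le> R")
      case True
      have "dist (t, t - t0 + u) (t0, u) = sqrt 2 * \<bar>t - t0\<bar>"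
        by (simp add: dist_Pair_Pair dist_real_def real_sqrt_mult flip: mult_2)
      also have "\<dots> \<le> 2 * \<bar>t - t0\<bar>"
        by (intro mult_right_mono) (auto simp: real_sqrt_le_iff[of 2 4, simplified])
      finally have "dist (t, t - t0 + u) (t0, u) < \<delta>"
        using near by linarith
      moreover have "(t, t - t0 + u) \<in> K" "(t0, u) \<in> K"
        using True near unfolding K_def by auto
      ultimately have "cmod (h t (t - t0 + u) - h t0 u) < \<eta>"
        using uc by (fastforce simp: dist_norm)
      also have "\<eta> \<le> \<epsilon> * decay q u"
        unfolding \<eta>_def decay_def using True assms
        by (intro mult_left_mono powr_mono2') auto
      finally show ?thesis by simp
    next
      case False
      then have "cmod (h t (t - t0 + u) - h t0 u) \<le> 2 powr (q + 1) * C * R powr (q - p) * decay q u"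
        using near R assms by (intro kernel_tail_bound) auto
      also have "\<dots> \<le> \<epsilon> * decay q u"
        using R(2) decay_pos[of q u] by (intro mult_right_mono) auto
      finally show ?thesis .
    qed
  qed
qed

lemma kernel_op_equicontinuous:
  assumes "0 < e"
  obtains d where "0 < d"
    and "\<And>t f. f \<in> L2S1 T \<Longrightarrow> \<bar>t - t0\<bar> < d \<Longrightarrow>
      cmod (kernel_op h f t - kernel_op h f t0) \<le> e * L2norm T f"
proof -
  define q where "q = (1 + p) / 2"
  have q: "1 < q" "q < p"
    using exponent_gt_one unfolding q_def by auto
  define M where "M = decay_conv_const q T"
  have M: "0 \<le> M"
    unfolding M_def using decay_conv_const_nonneg[OF period_pos q(1)] .
  define \<epsilon> where "\<epsilon> = e / (M + 1)"
  have \<epsilon>: "0 < \<epsilon>" "\<epsilon> * M \<le> e"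
    using divide_plus_one_pos[OF assms M] divide_plus_one_mult_less[OF assms M]
    unfolding \<epsilon>_def by simp_all
  obtain d where d: "0 < d"
    and shift: "\<And>t u. \<bar>t - t0\<bar> < d \<Longrightarrow> cmod (h t (t - t0 + u) - h t0 u) \<le> \<epsilon> * decay q u"
    using kernel_shift_estimate[of q \<epsilon> t0] q \<epsilon> by auto
  show ?thesis
  proof (rule that[OF d])
    fix t f
    assume f: "f \<in> L2S1 T" and t: "\<bar>t - t0\<bar> < d"
    define \<Delta> where "\<Delta> x u = h (x + (t - t0)) (t - t0 + u) - h x u" for x u
    have "kernel_op h f t = \<bar>1\<bar> *\<^sub>R (\<integral>u. h t (t - t0 + 1 * u) * f (t - (t - t0 + 1 * u)) \<partial>lborel)"
      unfolding kernel_op_def by (rule lborel_integral_real_affine) simp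
    then have shifted: "kernel_op h f t = (\<integral>u. h t (t - t0 + u) * f (t0 - u) \<partial>lborel)"
      by simp
    have "integrable lborel (\<lambda>u. h t (t - t0 + 1 * u) * f (t - (t - t0 + 1 * u)))"
      using kernel_op_integrable[OF f, of t] by (subst lborel_integrable_real_affine_iff) auto
    then have int_shifted: "integrable lborel (\<lambda>u. h t (t - t0 + u) * f (t0 - u))"
      by simp
    have "kernel_op h f t - kernel_op h f t0
        = (\<integral>u. h t (t - t0 + u) * f (t0 - u) \<partial>lborel) - (\<integral>u. h t0 u * f (t0 - u) \<partial>lborel)"
      unfolding shifted by (simp add: kernel_op_def)
    also have "\<dots> = (\<integral>u. h t (t - t0 + u) * f (t0 - u) - h t0 u * f (t0 - u) \<partial>lborel)"
      by (rule Bochner_Integration.integral_diff[symmetric, OF int_shifted kernel_op_integrable[OF f]])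
    also have "\<dots> = kernel_op \<Delta> f t0"
      unfolding kernel_op_def \<Delta>_def by (simp add: left_diff_distrib)
    finally have "cmod (kernel_op h f t - kernel_op h f t0) = cmod (kernel_op \<Delta> f t0)"
      by simp
    also have "\<dots> \<le> \<epsilon> * M * L2norm T f"
      unfolding M_def
    proof (rule norm_kernel_op_le[OF f period_pos q(1)])
      show "\<Delta> t0 \<in> borel_measurable borel"
        unfolding \<Delta>_def by measurable
      show "cmod (\<Delta> t0 s) \<le> \<epsilon> * decay q s" for s
        unfolding \<Delta>_def using shift[OF t] by simp
    qed
    also have "\<dots> \<le> e * L2norm T f"
      using \<epsilon>(2) L2norm_nonneg by (rule mult_right_mono)
    finally show "cmod (kernel_op h f t - kernel_op h f t0) \<le> e * L2norm T f" .
  qed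
qed

lemma continuous_on_kernel_op:
  assumes f: "f \<in> L2S1 T"
  shows "continuous_on UNIV (kernel_op h f)"
proof -
  have "isCont (kernel_op h f) t0" for t0
    unfolding continuous_at_eps_delta
  proof (intro allI impI)
    fix e :: real
    assume e: "0 < e"
    define e' where "e' = e / (L2norm T f + 1)"
    have e': "0 < e'" "e' * L2norm T f < e"
      using divide_plus_one_pos[OF e L2norm_nonneg] divide_plus_one_mult_less[OF e L2norm_nonneg]
      unfolding e'_def by simp_all
    obtain d where "0 < d"
      and "\<And>t. \<bar>t - t0\<bar> < d \<Longrightarrow> cmod (kernel_op h f t - kernel_op h f t0) \<le> e' * L2norm T f"
      using kernel_op_equicontinuous[OF e'(1), of t0] f by metis
    with e'(2) show "\<exists>d>0. \<forall>t. dist t t0 < d \<longrightarrow> dist (kernel_op h f t) (kernel_op h f t0) < e"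
      by (auto simp: dist_norm dist_real_def intro!: exI[of _ d] intro: le_less_trans)
  qed
  then show ?thesis
    by (simp add: continuous_on_eq_continuous_at)
qed

lemma kernel_op_in_L2S1:
  assumes f: "f \<in> L2S1 T"
  shows "kernel_op h f \<in> L2S1 T"
proof -
  have cont: "continuous_on UNIV (kernel_op h f)"
    by (rule continuous_on_kernel_op[OF f])
  have "f (t + T - s) = f (t - s)" for t s
    using L2S1_D(1)[OF f] by (metis add.commute add_diff_eq diff_add_eq)
  then have "kernel_op h f (t + T) = kernel_op h f t" for t
    unfolding kernel_op_def by (simp add: periodic_kernel)
  moreover have "kernel_op h f \<in> borel_measurable lborel"
    using borel_measurable_continuous_onI[OF cont] by (simp add: measurable_lborel1)
  moreover have "set_integrable lborel {0..T} (\<lambda>t. (cmod (kernel_op h f t))\<^sup>2)"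
    by (intro borel_integrable_atLeastAtMost' continuous_intros continuous_on_subset[OF cont]) auto
  ultimately show ?thesis
    unfolding L2S1_def by auto
qed

lemma kernel_op_linear:
  assumes "f \<in> L2S1 T" "g \<in> L2S1 T"
  shows "kernel_op h (\<lambda>x. a * f x + g x) t = a * kernel_op h f t + kernel_op h g t"
proof -
  have "kernel_op h (\<lambda>x. a * f x + g x) t
      = (\<integral>s. a * (h t s * f (t - s)) + h t s * g (t - s) \<partial>lborel)"
    unfolding kernel_op_def by (simp add: algebra_simps)
  also have "\<dots> = a * kernel_op h f t + kernel_op h g t"
    unfolding kernel_op_def
    using kernel_op_integrable[OF assms(1)] kernel_op_integrable[OF assms(2)] by simp
  finally show ?thesis .
qed

lemma compact_kernel_op: "compact_op_L2 T (kernel_op h)"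
  unfolding compact_op_L2_def
proof (intro conjI ballI allI impI)
  show "kernel_op h f \<in> L2S1 T" if "f \<in> L2S1 T" for f
    using that by (rule kernel_op_in_L2S1)
  show "L2norm T (\<lambda>t. kernel_op h (\<lambda>x. a * f x + g x) t - (a * kernel_op h f t + kernel_op h g t)) = 0"
    if "f \<in> L2S1 T" "g \<in> L2S1 T" for f g a
    using that by (simp add: kernel_op_linear L2norm_def)
next
  fix F :: "nat \<Rightarrow> real \<Rightarrow> complex"
  assume F: "\<forall>n. F n \<in> L2S1 T" and "\<exists>B. \<forall>n. L2norm T (F n) \<le> B"
  then obtain B where B: "\<And>n. L2norm T (F n) \<le> B"
    by blast
  have B0: "0 \<le> B"
    using B[of 0] L2norm_nonneg[of T "F 0"] by simp
  have bounded: "norm (kernel_op h (F n) x) \<le> C * decay_conv_const p T * B" for n x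
  proof -
    have "norm (kernel_op h (F n) x) \<le> C * decay_conv_const p T * L2norm T (F n)"
      using F by (intro norm_kernel_op_bound) simp
    also have "\<dots> \<le> C * decay_conv_const p T * B"
      using bound_nonneg decay_conv_const_nonneg[OF period_pos exponent_gt_one]
      by (intro mult_left_mono B) simp
    finally show ?thesis .
  qed
  have equicontinuous: "\<exists>d. 0 < d \<and> (\<forall>n y. y \<in> {0..T} \<and> norm (x - y) < d \<longrightarrow>
      norm (kernel_op h (F n) x - kernel_op h (F n) y) < e)" if "0 < e" for x e
  proof -
    define e' where "e' = e / (B + 1)"
    have e': "0 < e'" "e' * B < e"
      using divide_plus_one_pos[OF that B0] divide_plus_one_mult_less[OF that B0]
      unfolding e'_def by simp_all
    obtain d where "0 < d"
      and d: "\<And>t f. f \<in> L2S1 T \<Longrightarrow> \<bar>t - x\<bar> < d \<Longrightarrow>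
        cmod (kernel_op h f t - kernel_op h f x) \<le> e' * L2norm T f"
      using kernel_op_equicontinuous[OF e'(1), of x] by metis
    moreover have "norm (kernel_op h (F n) x - kernel_op h (F n) y) < e"
      if "norm (x - y) < d" for n y
    proof -
      have "cmod (kernel_op h (F n) y - kernel_op h (F n) x) \<le> e' * L2norm T (F n)"
        using that F by (intro d) (auto simp: abs_minus_commute)
      also have "\<dots> \<le> e' * B"
        using e'(1) B[of n] by (simp add: mult_left_mono)
      finally show ?thesis
        using e'(2) by (simp add: norm_minus_commute)
    qed
    ultimately show ?thesis
      by blast
  qed
  obtain g r where "continuous_on {0..T} g" and r: "strict_mono (r :: nat \<Rightarrow> nat)"
    and lim: "\<And>e. 0 < e \<Longrightarrow> \<exists>N. \<forall>n x. n \<ge> N \<and> x \<in> {0..T} \<longrightarrow>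
      norm (kernel_op h (F (r n)) x - g x) < e"
    by (rule Arzela_Ascoli[OF compact_Icc bounded equicontinuous]) (assumption | rule that)+
  have "\<forall>e>0. \<exists>N. \<forall>m\<ge>N. \<forall>n\<ge>N. L2norm T (\<lambda>t. kernel_op h (F (r m)) t - kernel_op h (F (r n)) t) < e"
    using period_pos by (intro L2norm_Cauchy_if_uniform_limit[OF _ lim]) simp
  with r show "\<exists>r::nat \<Rightarrow> nat. strict_mono r \<and> (\<forall>e>0. \<exists>N. \<forall>m\<ge>N. \<forall>n\<ge>N.
      L2norm T (\<lambda>t. kernel_op h (F (r m)) t - kernel_op h (F (r n)) t) < e)"
    by blast
qed

end

section \<open>Kernels of Laplace type\<close>

lemma norm_exp_i_mult: "cmod (exp (\<i> * \<sigma> * of_real s)) = exp (- Im \<sigma> * s)"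
  by (simp add: norm_exp_eq_Re)

lemma norm_exp_i_mult_le_one: "0 \<le> Im \<sigma> \<Longrightarrow> 0 \<le> s \<Longrightarrow> cmod (exp (\<i> * \<sigma> * of_real s)) \<le> 1"
  by (simp add: norm_exp_i_mult)

lemma norm_exp_minus_one_minus_le:
  fixes z :: complex
  shows "cmod (exp z - 1 - z) \<le> (cmod z)\<^sup>2 * exp (cmod z)"
  using Taylor_exp_field[of z 1] by (simp add: power2_eq_square algebra_simps)

lemma mult_exp_neg_le:
  fixes y s :: real
  assumes "0 < y" "0 \<le> s"
  shows "s * exp (- y * s) \<le> 1 / y"
proof -
  have "y * s \<le> exp (y * s)"
    using exp_ge_add_one_self[of "y * s"] by linarith
  with assms have "s * exp (- y * s) \<le> exp (y * s) / y * exp (- y * s)"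
    by (intro mult_right_mono) (auto simp: field_simps)
  also have "\<dots> = 1 / y"
    by (simp add: exp_minus field_simps)
  finally show ?thesis .
qed

lemma norm_exp_i_mult_diff_le:
  assumes "0 \<le> Im \<sigma>" "0 \<le> Im \<sigma>0" "0 < s" "0 \<le> \<theta>" "\<theta> \<le> 1"
  shows "cmod (exp (\<i> * \<sigma> * of_real s) - exp (\<i> * \<sigma>0 * of_real s))
       \<le> 4 * cmod (\<sigma> - \<sigma>0) powr \<theta> * (1 + s) powr \<theta>"
proof -
  define x where "x = cmod (\<sigma> - \<sigma>0) * s"
  have x: "0 \<le> x"
    unfolding x_def using assms(3) by simp
  have "cmod (exp (\<i> * \<sigma> * of_real s) - exp (\<i> * \<sigma>0 * of_real s)) \<le> 4 * min 1 x"
  proof (cases "x \<le> 1 / 2")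
    case True
    define w where "w = \<i> * (\<sigma> - \<sigma>0) * of_real s"
    have w: "cmod w = x"
      unfolding w_def x_def using assms(3) by (simp add: norm_mult)
    have "exp (\<i> * \<sigma> * of_real s) = exp (\<i> * \<sigma>0 * of_real s) * exp w"
      unfolding w_def by (simp add: exp_add[symmetric] algebra_simps)
    then have "exp (\<i> * \<sigma> * of_real s) - exp (\<i> * \<sigma>0 * of_real s)
        = exp (\<i> * \<sigma>0 * of_real s) * (exp w - 1)"
      by (simp add: algebra_simps)
    then have "cmod (exp (\<i> * \<sigma> * of_real s) - exp (\<i> * \<sigma>0 * of_real s))
        = cmod (exp (\<i> * \<sigma>0 * of_real s)) * cmod (exp w - 1)"
      by (simp only: norm_mult)
    also have "\<dots> \<le> 1 * (3 / 2 * x)"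
      using norm_exp_i_mult_le_one[OF assms(2)] norm_exp_bounds(2)[of w] True w assms(3)
      by (intro mult_mono) auto
    also have "\<dots> \<le> 4 * min 1 x"
      using True x by simp
    finally show ?thesis .
  next
    case False
    have "cmod (exp (\<i> * \<sigma> * of_real s) - exp (\<i> * \<sigma>0 * of_real s)) \<le> 1 + 1"
      using assms by (intro order_trans[OF norm_triangle_ineq4] add_mono norm_exp_i_mult_le_one) auto
    also have "\<dots> \<le> 4 * min 1 x"
      using False by simp
    finally show ?thesis .
  qed
  also have "min 1 x \<le> x powr \<theta>"
  proof (cases "x \<le> 1")
    case True
    then show ?thesis
      using x assms(4,5) powr_mono'[of \<theta> 1 x] by (cases "x = 0") auto
  next
    case False
    then show ?thesis
      using ge_one_powr_ge_zero[of x \<theta>] assms(4) by simp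
  qed
  also have "x powr \<theta> \<le> cmod (\<sigma> - \<sigma>0) powr \<theta> * (1 + s) powr \<theta>"
    unfolding x_def using assms by (simp add: powr_mult powr_mono2 mult_left_mono)
  finally show ?thesis
    by simp
qed

lemma exp_i_mult_diff_quotient_remainder_le:
  assumes y: "0 < Im \<sigma>" and a: "cmod a \<le> Im \<sigma> / 2" "a \<noteq> 0" and s: "0 < s"
  shows "cmod ((exp (\<i> * (\<sigma> + a) * of_real s) - exp (\<i> * \<sigma> * of_real s)) / a
            - \<i> * of_real s * exp (\<i> * \<sigma> * of_real s)) \<le> cmod a * (8 / (Im \<sigma>)\<^sup>2)"
proof -
  define w where "w = \<i> * a * of_real s"
  define y where "y = Im \<sigma>"
  have "exp (\<i> * (\<sigma> + a) * of_real s) = exp (\<i> * \<sigma> * of_real s) * exp w"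
    unfolding w_def by (simp add: exp_add[symmetric] algebra_simps)
  moreover have "w / a = \<i> * of_real s"
    unfolding w_def using a(2) by simp
  ultimately have eq: "(exp (\<i> * (\<sigma> + a) * of_real s) - exp (\<i> * \<sigma> * of_real s)) / a
      - \<i> * of_real s * exp (\<i> * \<sigma> * of_real s) = exp (\<i> * \<sigma> * of_real s) * ((exp w - 1 - w) / a)"
    using a(2) by (simp add: field_simps)
  have w: "cmod w = cmod a * s"
    unfolding w_def using s by (simp add: norm_mult)
  have "cmod (exp (\<i> * \<sigma> * of_real s) * ((exp w - 1 - w) / a))
      = exp (- y * s) * (cmod (exp w - 1 - w) / cmod a)"
    unfolding y_def by (simp add: norm_mult norm_divide norm_exp_i_mult)
  also have "\<dots> \<le> exp (- y * s) * ((cmod a * s)\<^sup>2 * exp (cmod a * s) / cmod a)"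
    using norm_exp_minus_one_minus_le[of w] a(2) unfolding w
    by (intro mult_left_mono divide_right_mono) auto
  also have "\<dots> = cmod a * (s\<^sup>2 * (exp (- y * s) * exp (cmod a * s)))"
    using a(2) by (simp add: power2_eq_square field_simps)
  also have "\<dots> = cmod a * (s\<^sup>2 * exp (- y * s + cmod a * s))"
    by (simp add: mult_exp_exp)
  also have "\<dots> \<le> cmod a * (s\<^sup>2 * exp (- (y * s / 2)))"
  proof -
    have "cmod a * s \<le> y / 2 * s"
      using a(1) s unfolding y_def by (intro mult_right_mono) auto
    then show ?thesis
      by (intro mult_left_mono) auto
  qed
  also have "\<dots> \<le> cmod a * (8 / y\<^sup>2)"
  proof -
    have ys: "0 \<le> y * s / 2"
      using y s unfolding y_def by simp
    have "(y * s / 2)\<^sup>2 / 2 \<le> exp (y * s / 2)"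
      using exp_lower_Taylor_quadratic[OF ys] ys by linarith
    then have "s\<^sup>2 \<le> 8 / y\<^sup>2 * exp (y * s / 2)"
      using y unfolding y_def by (simp add: power2_eq_square field_simps)
    then have "s\<^sup>2 * exp (- (y * s / 2)) \<le> 8 / y\<^sup>2 * exp (y * s / 2) * exp (- (y * s / 2))"
      by (intro mult_right_mono) auto
    also have "\<dots> = 8 / y\<^sup>2"
      by (simp add: exp_minus field_simps)
    finally show ?thesis
      by (intro mult_left_mono) auto
  qed
  finally show ?thesis
    unfolding eq y_def .
qed

definition laplace_op :: "(real \<Rightarrow> real \<Rightarrow> complex) \<Rightarrow> complex \<Rightarrow> (real \<Rightarrow> complex) \<Rightarrow> real \<Rightarrow> complex" where
  "laplace_op h \<sigma> = kernel_op (\<lambda>t s. h t s * exp (\<i> * \<sigma> * of_real s))"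

definition laplace_deriv_op ::
    "(real \<Rightarrow> real \<Rightarrow> complex) \<Rightarrow> complex \<Rightarrow> (real \<Rightarrow> complex) \<Rightarrow> real \<Rightarrow> complex" where
  "laplace_deriv_op h \<sigma> = kernel_op (\<lambda>t s. h t s * (\<i> * of_real s * exp (\<i> * \<sigma> * of_real s)))"

locale causal_kernel = decaying_kernel +
  assumes vanishes_nonpos: "\<And>t s. s \<le> 0 \<Longrightarrow> h t s = 0"
begin

lemma mult_multiplier:
  assumes cont: "continuous_on UNIV \<phi>" and \<theta>: "0 \<le> \<theta>" "1 < p - \<theta>"
    and bound: "\<And>s. 0 < s \<Longrightarrow> cmod (\<phi> s) \<le> B * (1 + s) powr \<theta>"
  shows "causal_kernel T (p - \<theta>) (C * B) (\<lambda>t s. h t s * \<phi> s)"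
proof unfold_locales
  have B: "0 \<le> B"
    using bound[of 1] by (smt (verit) norm_ge_zero powr_gt_zero zero_le_mult_iff)
  show "0 < T" "1 < p - \<theta>"
    using period_pos \<theta>(2) .
  show "continuous_on UNIV (\<lambda>z. h (fst z) (snd z) * \<phi> (snd z))"
    by (intro continuous_intros continuous_kernel continuous_on_compose2[OF cont]) auto
  show "h (t + T) s * \<phi> s = h t s * \<phi> s" for t s
    by (simp add: periodic_kernel)
  show "h t s * \<phi> s = 0" if "s \<le> 0" for t s
    using that by (simp add: vanishes_nonpos)
  show "cmod (h t s * \<phi> s) \<le> C * B * decay (p - \<theta>) s" for t s
  proof (cases "0 < s")
    case True
    have "cmod (h t s * \<phi> s) \<le> C * decay p s * (B * (1 + s) powr \<theta>)"
      unfolding norm_mult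
      using kernel_bound bound[OF True] bound_nonneg decay_pos[of p s]
      by (intro mult_mono) auto
    also have "\<dots> = C * B * decay (p - \<theta>) s"
      using True by (simp add: decay_def powr_add[symmetric])
    finally show ?thesis .
  next
    case False
    then show ?thesis
      using vanishes_nonpos[of s t] bound_nonneg B decay_pos[of "p - \<theta>" s] by simp
  qed
qed

lemma laplace_kernel:
  assumes "0 \<le> Im \<sigma>"
  shows "causal_kernel T p C (\<lambda>t s. h t s * exp (\<i> * \<sigma> * of_real s))"
proof -
  have "causal_kernel T (p - 0) (C * 1) (\<lambda>t s. h t s * exp (\<i> * \<sigma> * of_real s))"
    using exponent_gt_one norm_exp_i_mult_le_one[OF assms]
    by (intro mult_multiplier) (auto intro!: continuous_intros)
  then show ?thesis
    by simp
qed

lemma laplace_deriv_kernel: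
  assumes "0 < Im \<sigma>"
  shows "causal_kernel T p (C / Im \<sigma>) (\<lambda>t s. h t s * (\<i> * of_real s * exp (\<i> * \<sigma> * of_real s)))"
proof -
  have "causal_kernel T (p - 0) (C * (1 / Im \<sigma>))
      (\<lambda>t s. h t s * (\<i> * of_real s * exp (\<i> * \<sigma> * of_real s)))"
    using exponent_gt_one mult_exp_neg_le[OF assms]
    by (intro mult_multiplier) (auto intro!: continuous_intros simp: norm_mult norm_exp_i_mult)
  then show ?thesis
    by simp
qed

lemma compact_laplace_op: "0 \<le> Im \<sigma> \<Longrightarrow> compact_op_L2 T (laplace_op h \<sigma>)"
  unfolding laplace_op_def
  using causal_kernel.axioms(1)[OF laplace_kernel] by (rule decaying_kernel.compact_kernel_op)

lemma laplace_op_diff_quotient_remainder: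
  assumes y: "0 < Im \<sigma>" and a: "a \<noteq> 0" "cmod a \<le> Im \<sigma> / 2" and f: "f \<in> L2S1 T"
  shows "L2norm T (\<lambda>t. (laplace_op h (\<sigma> + a) f t - laplace_op h \<sigma> f t) / a - laplace_deriv_op h \<sigma> f t)
       \<le> sqrt T * C * (8 / (Im \<sigma>)\<^sup>2) * decay_conv_const p T * cmod a * L2norm T f"
proof -
  define \<phi> where "\<phi> s = (exp (\<i> * (\<sigma> + a) * of_real s) - exp (\<i> * \<sigma> * of_real s)) / a
    - \<i> * of_real s * exp (\<i> * \<sigma> * of_real s)" for s
  have "0 \<le> Im (\<sigma> + a)"
    using abs_Im_le_cmod[of a] a y by simp
  then interpret G': causal_kernel T p C "\<lambda>t s. h t s * exp (\<i> * (\<sigma> + a) * of_real s)"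
    by (rule laplace_kernel)
  interpret G: causal_kernel T p C "\<lambda>t s. h t s * exp (\<i> * \<sigma> * of_real s)"
    using y by (intro laplace_kernel) simp
  interpret D: causal_kernel T p "C / Im \<sigma>" "\<lambda>t s. h t s * (\<i> * of_real s * exp (\<i> * \<sigma> * of_real s))"
    using y by (rule laplace_deriv_kernel)
  have "causal_kernel T (p - 0) (C * (cmod a * (8 / (Im \<sigma>)\<^sup>2))) (\<lambda>t s. h t s * \<phi> s)"
    using exponent_gt_one exp_i_mult_diff_quotient_remainder_le[OF y a(2,1)] a(1)
    unfolding \<phi>_def by (intro mult_multiplier) (auto intro!: continuous_intros)
  then interpret R: causal_kernel T p "C * (cmod a * (8 / (Im \<sigma>)\<^sup>2))" "\<lambda>t s. h t s * \<phi> s"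
    by simp
  have "(laplace_op h (\<sigma> + a) f t - laplace_op h \<sigma> f t) / a - laplace_deriv_op h \<sigma> f t
      = kernel_op (\<lambda>t s. h t s * \<phi> s) f t" for t
  proof -
    note int = G'.kernel_op_integrable[OF f, of t] G.kernel_op_integrable[OF f, of t]
      D.kernel_op_integrable[OF f, of t]
    have "(laplace_op h (\<sigma> + a) f t - laplace_op h \<sigma> f t) / a - laplace_deriv_op h \<sigma> f t
        = (\<integral>s. (h t s * exp (\<i> * (\<sigma> + a) * of_real s) * f (t - s)
                  - h t s * exp (\<i> * \<sigma> * of_real s) * f (t - s)) / a
               - h t s * (\<i> * of_real s * exp (\<i> * \<sigma> * of_real s)) * f (t - s) \<partial>lborel)"
      unfolding laplace_op_def laplace_deriv_op_def kernel_op_def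
      using int by (simp add: Bochner_Integration.integral_diff integrable_divide_zero)
    also have "\<dots> = kernel_op (\<lambda>t s. h t s * \<phi> s) f t"
      unfolding kernel_op_def \<phi>_def using a(1)
      by (intro Bochner_Integration.integral_cong) (simp_all add: field_simps)
    finally show ?thesis .
  qed
  then have "L2norm T (\<lambda>t. (laplace_op h (\<sigma> + a) f t - laplace_op h \<sigma> f t) / a - laplace_deriv_op h \<sigma> f t)
      = L2norm T (kernel_op (\<lambda>t s. h t s * \<phi> s) f)"
    by simp
  also have "\<dots> \<le> sqrt T * (C * (cmod a * (8 / (Im \<sigma>)\<^sup>2))) * decay_conv_const p T * L2norm T f"
    by (rule R.L2norm_kernel_op_bound[OF f])
  finally show ?thesis
    by (simp add: mult_ac)
qed

lemma laplace_op_holomorphic: "op_holomorphic_on T (laplace_op h) {\<sigma>. 0 < Im \<sigma>}"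
  unfolding op_holomorphic_on_def
proof
  fix \<sigma> :: complex
  assume "\<sigma> \<in> {\<sigma>. 0 < Im \<sigma>}"
  then have y: "0 < Im \<sigma>"
    by simp
  interpret D: causal_kernel T p "C / Im \<sigma>" "\<lambda>t s. h t s * (\<i> * of_real s * exp (\<i> * \<sigma> * of_real s))"
    using y by (rule laplace_deriv_kernel)
  define A where "A = sqrt T * C * (8 / (Im \<sigma>)\<^sup>2) * decay_conv_const p T"
  have A: "0 \<le> A"
    unfolding A_def using period_pos bound_nonneg decay_conv_const_nonneg[OF period_pos exponent_gt_one]
    by simp
  have "L2norm T (\<lambda>t. (laplace_op h (\<sigma> + a) f t - laplace_op h \<sigma> f t) / a - laplace_deriv_op h \<sigma> f t)
      \<le> e * L2norm T f"
    if e: "0 < e" and a: "a \<noteq> 0" "cmod a < min (Im \<sigma> / 2) (e / (A + 1))" and f: "f \<in> L2S1 T"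
    for e a f
  proof -
    have "cmod a * A \<le> e / (A + 1) * A"
      using a(2) A by (intro mult_right_mono) auto
    then have "cmod a * A \<le> e"
      using divide_plus_one_mult_less[OF e A] by linarith
    moreover have "L2norm T (\<lambda>t. (laplace_op h (\<sigma> + a) f t - laplace_op h \<sigma> f t) / a - laplace_deriv_op h \<sigma> f t)
        \<le> cmod a * A * L2norm T f"
      using laplace_op_diff_quotient_remainder[OF y a(1) _ f] a(2) unfolding A_def
      by (simp add: mult_ac)
    ultimately show ?thesis
      using L2norm_nonneg by (meson mult_right_mono order.trans)
  qed
  moreover have "0 < min (Im \<sigma> / 2) (e / (A + 1))" if "0 < e" for e
    using y divide_plus_one_pos[OF that A] by simp
  ultimately show "\<exists>D. (\<forall>f\<in>L2S1 T. D f \<in> L2S1 T) \<and>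
      (\<exists>C. \<forall>f\<in>L2S1 T. L2norm T (D f) \<le> C * L2norm T f) \<and>
      (\<forall>e>0. \<exists>d>0. \<forall>a. a \<noteq> 0 \<and> cmod a < d \<longrightarrow>
        (\<forall>f\<in>L2S1 T. L2norm T (\<lambda>t. (laplace_op h (\<sigma> + a) f t - laplace_op h \<sigma> f t) / a - D f t)
          \<le> e * L2norm T f))"
    using D.kernel_op_in_L2S1 D.L2norm_kernel_op_bound unfolding laplace_deriv_op_def
    by blast
qed

lemma laplace_op_continuous: "op_continuous_on T (laplace_op h) {\<sigma>. 0 \<le> Im \<sigma>}"
  unfolding op_continuous_on_def
proof (intro ballI allI impI)
  fix \<sigma>0 :: complex and e :: real
  assume \<sigma>0: "\<sigma>0 \<in> {\<sigma>. 0 \<le> Im \<sigma>}" and e: "0 < e"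
  define \<theta> where "\<theta> = min 1 ((p - 1) / 2)"
  have \<theta>: "0 < \<theta>" "\<theta> \<le> 1" "1 < p - \<theta>"
    using exponent_gt_one unfolding \<theta>_def by (auto simp: min_def field_simps)
  define A where "A = sqrt T * C * 4 * decay_conv_const (p - \<theta>) T"
  have A: "0 \<le> A"
    unfolding A_def using period_pos bound_nonneg decay_conv_const_nonneg[OF period_pos \<theta>(3)]
    by simp
  define d where "d = (e / (A + 1)) powr (1 / \<theta>)"
  have "0 < d"
    unfolding d_def powr_gt_zero using divide_plus_one_pos[OF e A] by linarith
  moreover have "L2norm T (\<lambda>t. laplace_op h \<sigma> f t - laplace_op h \<sigma>0 f t) \<le> e * L2norm T f"
    if \<sigma>: "0 \<le> Im \<sigma>" and near: "cmod (\<sigma> - \<sigma>0) < d" and f: "f \<in> L2S1 T" for \<sigma> f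
  proof -
    define \<delta> where "\<delta> = cmod (\<sigma> - \<sigma>0) powr \<theta>"
    have "\<delta> \<le> d powr \<theta>"
      unfolding \<delta>_def using near \<theta> by (intro powr_mono2) auto
    also have "d powr \<theta> = (e / (A + 1)) powr (1 / \<theta> * \<theta>)"
      unfolding d_def by (rule powr_powr)
    also have "1 / \<theta> * \<theta> = 1"
      using \<theta>(1) by simp
    finally have "\<delta> \<le> e / (A + 1)"
      using e A by simp
    then have "A * \<delta> \<le> A * (e / (A + 1))"
      using A by (rule mult_left_mono)
    then have "A * \<delta> \<le> e"
      using divide_plus_one_mult_less[OF e A] by (simp only: mult.commute)
    interpret G: causal_kernel T p C "\<lambda>t s. h t s * exp (\<i> * \<sigma> * of_real s)"
      using \<sigma> by (rule laplace_kernel)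
    interpret G0: causal_kernel T p C "\<lambda>t s. h t s * exp (\<i> * \<sigma>0 * of_real s)"
      using \<sigma>0 by (intro laplace_kernel) simp
    interpret \<Delta>: causal_kernel T "p - \<theta>" "C * (4 * \<delta>)"
        "\<lambda>t s. h t s * (exp (\<i> * \<sigma> * of_real s) - exp (\<i> * \<sigma>0 * of_real s))"
      using norm_exp_i_mult_diff_le[of \<sigma> \<sigma>0 _ \<theta>] \<sigma> \<sigma>0 \<theta>
      unfolding \<delta>_def by (intro mult_multiplier) (auto intro!: continuous_intros simp: mult_ac)
    have "laplace_op h \<sigma> f t - laplace_op h \<sigma>0 f t
        = kernel_op (\<lambda>t s. h t s * (exp (\<i> * \<sigma> * of_real s) - exp (\<i> * \<sigma>0 * of_real s))) f t" for t
    proof -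
      have "laplace_op h \<sigma> f t - laplace_op h \<sigma>0 f t
          = (\<integral>s. h t s * exp (\<i> * \<sigma> * of_real s) * f (t - s)
               - h t s * exp (\<i> * \<sigma>0 * of_real s) * f (t - s) \<partial>lborel)"
        unfolding laplace_op_def kernel_op_def
        by (rule Bochner_Integration.integral_diff[symmetric,
              OF G.kernel_op_integrable[OF f] G0.kernel_op_integrable[OF f]])
      also have "\<dots> = kernel_op (\<lambda>t s. h t s * (exp (\<i> * \<sigma> * of_real s) - exp (\<i> * \<sigma>0 * of_real s))) f t"
        unfolding kernel_op_def by (simp add: algebra_simps)
      finally show ?thesis .
    qed
    then have "L2norm T (\<lambda>t. laplace_op h \<sigma> f t - laplace_op h \<sigma>0 f t)
        = L2norm T (kernel_op (\<lambda>t s. h t s * (exp (\<i> * \<sigma> * of_real s) - exp (\<i> * \<sigma>0 * of_real s))) f)"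
      by simp
    also have "\<dots> \<le> sqrt T * (C * (4 * \<delta>)) * decay_conv_const (p - \<theta>) T * L2norm T f"
      by (rule \<Delta>.L2norm_kernel_op_bound[OF f])
    also have "\<dots> = A * \<delta> * L2norm T f"
      unfolding A_def by (simp add: mult_ac)
    also have "\<dots> \<le> e * L2norm T f"
      using \<open>A * \<delta> \<le> e\<close> L2norm_nonneg by (rule mult_right_mono)
    finally show ?thesis .
  qed
  ultimately show "\<exists>d>0. \<forall>\<sigma>\<in>{\<sigma>. 0 \<le> Im \<sigma>}. cmod (\<sigma> - \<sigma>0) < d \<longrightarrow>
      (\<forall>f\<in>L2S1 T. L2norm T (\<lambda>t. laplace_op h \<sigma> f t - laplace_op h \<sigma>0 f t) \<le> e * L2norm T f)"
    by blast
qed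

end

section \<open>The kernel of \<open>K\<^sub>L\<close>\<close>

lemma periodic_continuous_bounded:
  fixes g :: "real \<Rightarrow> 'a::real_normed_vector"
  assumes "continuous_on UNIV g" "\<forall>t. g (t + T) = g t" "0 < T"
  obtains B where "\<And>x. norm (g x) \<le> B"
proof -
  have "compact (g ` {0..T})"
    by (rule compact_continuous_image[OF continuous_on_subset[OF assms(1)]]) auto
  then obtain B where B: "\<And>y. y \<in> g ` {0..T} \<Longrightarrow> norm y \<le> B"
    by (meson bounded_iff compact_imp_bounded)
  have "norm (g x) \<le> B" for x
  proof -
    define n where "n = \<lfloor>x / T\<rfloor>"
    have "of_int n \<le> x / T" "x / T < of_int n + 1"
      unfolding n_def by linarith+
    then have "x - of_int n * T \<in> {0..T}"
      using assms(3) by (simp add: le_divide_eq divide_less_eq algebra_simps)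
    moreover have "g x = g ((x - of_int n * T) + of_int n * T)"
      by simp
    then have "g x = g (x - of_int n * T)"
      using periodic_add_of_int_mult[OF assms(2)] by metis
    ultimately show ?thesis
      using B by auto
  qed
  then show ?thesis
    by (rule that)
qed

lemma periodic_C1_lipschitz:
  fixes c :: "real \<Rightarrow> real"
  assumes deriv: "\<And>x. (c has_real_derivative c' x) (at x)" and "continuous_on UNIV c'"
    and periodic: "\<forall>t. c (t + T) = c t" and "0 < T"
  obtains L where "\<And>t s. 0 < s \<Longrightarrow> \<bar>c t - c (t - s)\<bar> \<le> L * s"
proof -
  have "c' (x + T) = c' x" for x
  proof -
    have "((\<lambda>y. c (y + T)) has_real_derivative c' (x + T)) (at x)"
      using deriv[of "x + T"] by (simp add: DERIV_shift)
    then have "(c has_real_derivative c' (x + T)) (at x)"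
      using periodic by simp
    then show ?thesis
      using deriv[of x] by (rule DERIV_unique)
  qed
  then obtain L where L: "\<And>x. \<bar>c' x\<bar> \<le> L"
    using periodic_continuous_bounded[of c' T] assms by auto
  have "\<bar>c t - c (t - s)\<bar> \<le> L * s" if s: "0 < s" for t s
  proof -
    obtain z where "c t - c (t - s) = (t - (t - s)) * c' z"
      using MVT2[of "t - s" t c c'] deriv s by auto
    then have "\<bar>c t - c (t - s)\<bar> = s * \<bar>c' z\<bar>"
      using s by (simp add: abs_mult)
    also have "\<dots> \<le> s * L"
      using s L by (intro mult_left_mono) auto
    finally show ?thesis
      by (simp add: mult.commute)
  qed
  then show ?thesis
    by (rule that)
qed

definition KL_kernel :: "(real \<Rightarrow> real) \<Rightarrow> real \<Rightarrow> real \<Rightarrow> complex" where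
  "KL_kernel c t s = (if 0 < s then csqrt (\<i> / of_real pi)
      * (exp (\<i> * of_real ((c t - c (t - s))\<^sup>2 / (4 * s))) - 1) / of_real (sqrt s) else 0)"

lemma KL_eq_laplace_op: "KL c = laplace_op (KL_kernel c)"
proof (intro ext)
  fix \<sigma> f t
  have "KL c \<sigma> f t = csqrt (\<i> / of_real pi) * (\<integral>s. indicator {0<..} s *\<^sub>R
      ((exp (\<i> * of_real ((c t - c (t - s))\<^sup>2 / (4 * s))) - 1) * exp (\<i> * \<sigma> * of_real s)
        * f (t - s) / of_real (sqrt s)) \<partial>lborel)"
    unfolding KL_def set_lebesgue_integral_def by simp
  also have "\<dots> = (\<integral>s. csqrt (\<i> / of_real pi) * (indicator {0<..} s *\<^sub>R
      ((exp (\<i> * of_real ((c t - c (t - s))\<^sup>2 / (4 * s))) - 1) * exp (\<i> * \<sigma> * of_real s)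
        * f (t - s) / of_real (sqrt s))) \<partial>lborel)"
    by (rule integral_mult_right_zero[symmetric])
  also have "\<dots> = laplace_op (KL_kernel c) \<sigma> f t"
    unfolding laplace_op_def kernel_op_def KL_kernel_def
    by (intro Bochner_Integration.integral_cong) (auto simp: indicator_def)
  finally show "KL c \<sigma> f t = laplace_op (KL_kernel c) \<sigma> f t" .
qed

lemma norm_exp_i_minus_one_le: "cmod (exp (\<i> * of_real x) - 1) \<le> \<bar>x\<bar>"
proof -
  have "cmod (exp (\<i> * of_real x) - 1) = 2 * \<bar>sin (x / 2)\<bar>"
    by (rule dist_exp_i_1)
  also have "\<dots> \<le> 2 * \<bar>x / 2\<bar>"
    by (intro mult_left_mono abs_sin_x_le_abs_x) auto
  finally show ?thesis
    by simp
qed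

lemma norm_KL_kernel_le:
  assumes L: "\<And>t s. 0 < s \<Longrightarrow> \<bar>c t - c (t - s)\<bar> \<le> L * s" and M: "\<And>t. \<bar>c t\<bar> \<le> M"
    and s: "0 < s"
  shows "cmod (KL_kernel c t s) \<le> L\<^sup>2 / 4 * sqrt s"
    and "cmod (KL_kernel c t s) \<le> M\<^sup>2 / (s * sqrt s)"
proof -
  define \<theta> where "\<theta> = (c t - c (t - s))\<^sup>2 / (4 * s)"
  have "cmod (csqrt (\<i> / of_real pi)) \<le> 1"
    using pi_ge_two by (simp add: norm_divide)
  then have "cmod (KL_kernel c t s) \<le> cmod (exp (\<i> * of_real \<theta>) - 1) / sqrt s"
    unfolding KL_kernel_def \<theta>_def using s
    by (simp add: norm_mult norm_divide divide_right_mono mult_left_le_one_le)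
  also have "\<dots> \<le> \<theta> / sqrt s"
    using norm_exp_i_minus_one_le[of \<theta>] s unfolding \<theta>_def by (intro divide_right_mono) auto
  finally have bound: "cmod (KL_kernel c t s) \<le> \<theta> / sqrt s" .
  have "(c t - c (t - s))\<^sup>2 \<le> (L * s)\<^sup>2"
    using power_mono[OF L[OF s, of t] abs_ge_zero, of 2] by simp
  then have "\<theta> \<le> L\<^sup>2 * s / 4"
    unfolding \<theta>_def using s by (simp add: field_simps power2_eq_square)
  then have "\<theta> / sqrt s \<le> (L\<^sup>2 * s / 4) / sqrt s"
    using s by (intro divide_right_mono) auto
  also have "(L\<^sup>2 * s / 4) / sqrt s = L\<^sup>2 / 4 * sqrt s"
    using s by (simp add: field_simps)
  finally show "cmod (KL_kernel c t s) \<le> L\<^sup>2 / 4 * sqrt s"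
    using bound by linarith
  have M2: "\<bar>c t - c (t - s)\<bar> \<le> 2 * M"
    using M[of t] M[of "t - s"] by linarith
  have "(c t - c (t - s))\<^sup>2 \<le> (2 * M)\<^sup>2"
    using power_mono[OF M2 abs_ge_zero, of 2] by simp
  then have "\<theta> \<le> (2 * M)\<^sup>2 / (4 * s)"
    unfolding \<theta>_def using s by (intro divide_right_mono) auto
  then have "\<theta> \<le> M\<^sup>2 / s"
    using s by (simp add: power_mult_distrib)
  then have "\<theta> / sqrt s \<le> (M\<^sup>2 / s) / sqrt s"
    using s by (intro divide_right_mono) auto
  then show "cmod (KL_kernel c t s) \<le> M\<^sup>2 / (s * sqrt s)"
    using bound by simp
qed

lemma decay_three_halves: "0 \<le> s \<Longrightarrow> decay (3 / 2) s = 1 / ((1 + s) * sqrt (1 + s))"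
proof -
  assume s: "0 \<le> s"
  have "(1 + s) powr (3 / 2) = (1 + s) powr (1 + 1 / 2)"
    by (rule arg_cong[where f="\<lambda>a. (1 + s) powr a"]) simp
  also have "\<dots> = (1 + s) powr 1 * (1 + s) powr (1 / 2)"
    by (rule powr_add)
  also have "\<dots> = (1 + s) * sqrt (1 + s)"
    using s by (simp add: powr_half_sqrt)
  finally have three_halves: "(1 + s) powr (3 / 2) = (1 + s) * sqrt (1 + s)" .
  have "decay (3 / 2) s = (1 + s) powr (- (3 / 2))"
    unfolding decay_def using s by simp
  also have "\<dots> = 1 / ((1 + s) * sqrt (1 + s))"
    unfolding powr_minus three_halves by (rule inverse_eq_divide)
  finally show ?thesis .
qed

lemma min_sqrt_bound_le_decay:
  assumes "0 < s" "0 \<le> a" "0 \<le> b"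
  shows "min (a * sqrt s) (b / (s * sqrt s)) \<le> 3 * (a + b) * decay (3 / 2) s"
proof -
  have sqrt2: "sqrt 2 \<le> 3 / 2"
    by (rule real_le_lsqrt) (auto simp: power2_eq_square)
  have w: "decay (3 / 2) s = 1 / ((1 + s) * sqrt (1 + s))"
    using assms(1) by (simp add: decay_three_halves)
  show ?thesis
  proof (cases "s \<le> 1")
    case True
    have "(1 + s) * sqrt (1 + s) \<le> 2 * sqrt 2"
      using True assms(1) by (intro mult_mono) auto
    with sqrt2 have "(1 + s) * sqrt (1 + s) \<le> 3"
      by linarith
    then have "1 / 3 \<le> decay (3 / 2) s"
      unfolding w using assms(1) by (intro divide_left_mono) auto
    have "min (a * sqrt s) (b / (s * sqrt s)) \<le> a"
      using True assms by (simp add: min.coboundedI1 mult_left_le)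
    also have "\<dots> \<le> 3 * (a + b) * (1 / 3)"
      using assms by simp
    also have "\<dots> \<le> 3 * (a + b) * decay (3 / 2) s"
      using \<open>1 / 3 \<le> decay (3 / 2) s\<close> assms by (intro mult_left_mono) auto
    finally show ?thesis .
  next
    case False
    have "(1 + s) * sqrt (1 + s) \<le> (2 * s) * (sqrt 2 * sqrt s)"
      using False by (intro mult_mono) (auto simp: real_sqrt_mult[symmetric])
    also have "\<dots> \<le> (2 * s) * (3 / 2 * sqrt s)"
      using sqrt2 assms(1) by (intro mult_left_mono mult_right_mono) auto
    finally have "(1 + s) * sqrt (1 + s) \<le> 3 * (s * sqrt s)"
      by simp
    then have "3 / (3 * (s * sqrt s)) \<le> 3 / ((1 + s) * sqrt (1 + s))"
      using assms(1) by (intro divide_left_mono) auto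
    then have "b * (3 / (3 * (s * sqrt s))) \<le> b * (3 / ((1 + s) * sqrt (1 + s)))"
      using assms(3) by (rule mult_left_mono)
    then have "b / (s * sqrt s) \<le> b * (3 * decay (3 / 2) s)"
      unfolding w by simp
    also have "\<dots> \<le> 3 * (a + b) * decay (3 / 2) s"
      using assms decay_pos[of "3 / 2" s] by (simp add: mult_right_mono)
    finally show ?thesis
      by simp
  qed
qed

lemma continuous_on_KL_kernel:
  assumes cont: "continuous_on UNIV c"
    and small: "\<And>t s. 0 < s \<Longrightarrow> cmod (KL_kernel c t s) \<le> K * sqrt s"
  shows "continuous_on UNIV (\<lambda>z. KL_kernel c (fst z) (snd z))"
proof (intro continuous_at_imp_continuous_on ballI)
  fix z :: "real \<times> real"
  let ?G = "\<lambda>z. KL_kernel c (fst z) (snd z)"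
  have K: "0 \<le> K"
    using order_trans[OF norm_ge_zero small[OF zero_less_one, of 0]] by simp
  consider "snd z > 0" | "snd z < 0" | "snd z = 0"
    by linarith
  then show "isCont ?G z"
  proof cases
    case 1
    define S where "S = {z :: real \<times> real. 0 < snd z}"
    have "open S"
      unfolding S_def by (rule open_Collect_less) (auto intro: continuous_intros)
    have "continuous_on S (\<lambda>z. c (fst z))"
      by (rule continuous_on_compose2[OF cont]) (auto intro: continuous_intros)
    moreover have "continuous_on S (\<lambda>z. c (fst z - snd z))"
      by (rule continuous_on_compose2[OF cont]) (auto intro!: continuous_intros)
    ultimately have "continuous_on S (\<lambda>z. csqrt (\<i> / of_real pi) * (exp (\<i> * of_real ((c (fst z) - c (fst z - snd z))\<^sup>2
        / (4 * snd z))) - 1) / of_real (sqrt (snd z)))"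
      by (intro continuous_intros) (auto simp: S_def)
    then have "continuous_on S ?G"
      by (rule continuous_on_cong[THEN iffD1, rotated -1]) (auto simp: S_def KL_kernel_def)
    with \<open>open S\<close> have "\<forall>x\<in>S. isCont ?G x"
      by (simp add: continuous_on_eq_continuous_at)
    with 1 show ?thesis
      unfolding S_def by blast
  next
    case 2
    define S where "S = {z :: real \<times> real. snd z < 0}"
    have "open S"
      unfolding S_def by (rule open_Collect_less) (auto intro: continuous_intros)
    have "continuous_on S ?G"
      by (rule continuous_on_cong[THEN iffD1, OF refl _ continuous_on_const[of S 0]])
        (auto simp: S_def KL_kernel_def)
    with \<open>open S\<close> have "\<forall>x\<in>S. isCont ?G x"
      by (simp add: continuous_on_eq_continuous_at)
    with 2 show ?thesis
      unfolding S_def by blast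
  next
    case 3
    have "(?G \<longlongrightarrow> 0) (at z)"
    proof (rule Lim_null_comparison)
      show "\<forall>\<^sub>F w in at z. norm (?G w) \<le> K * sqrt \<bar>snd w\<bar>"
        using small K by (intro always_eventually allI) (auto simp: KL_kernel_def)
      have "((\<lambda>w. K * sqrt \<bar>snd w\<bar>) \<longlongrightarrow> K * sqrt \<bar>snd z\<bar>) (at z)"
        by (intro tendsto_intros)
      then show "((\<lambda>w. K * sqrt \<bar>snd w\<bar>) \<longlongrightarrow> 0) (at z)"
        using 3 by simp
    qed
    then show ?thesis
      using 3 unfolding isCont_def by (simp add: KL_kernel_def)
  qed
qed

lemma causal_kernel_KL_kernel:
  assumes T: "0 < T" and cont: "continuous_on UNIV c" and periodic: "\<forall>t. c (t + T) = c t"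
    and L: "\<And>t s. 0 < s \<Longrightarrow> \<bar>c t - c (t - s)\<bar> \<le> L * s" and M: "\<And>t. \<bar>c t\<bar> \<le> M"
  shows "causal_kernel T (3 / 2) (3 * (L\<^sup>2 / 4 + M\<^sup>2)) (KL_kernel c)"
proof unfold_locales
  show "0 < T" "1 < (3 / 2 :: real)"
    using T by simp_all
  show "continuous_on UNIV (\<lambda>z. KL_kernel c (fst z) (snd z))"
    using cont norm_KL_kernel_le(1)[OF L M] by (rule continuous_on_KL_kernel)
  show "KL_kernel c (t + T) s = KL_kernel c t s" for t s
  proof -
    have "c (t + T - s) = c (t - s)"
      using periodic[rule_format, of "t - s"] by (simp add: algebra_simps)
    then show ?thesis
      using periodic by (simp add: KL_kernel_def)
  qed
  show "KL_kernel c t s = 0" if "s \<le> 0" for t s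
    using that by (simp add: KL_kernel_def)
  show "cmod (KL_kernel c t s) \<le> 3 * (L\<^sup>2 / 4 + M\<^sup>2) * decay (3 / 2) s" for t s
  proof (cases "0 < s")
    case True
    then have "cmod (KL_kernel c t s) \<le> min (L\<^sup>2 / 4 * sqrt s) (M\<^sup>2 / (s * sqrt s))"
      using norm_KL_kernel_le[OF L M] by simp
    also have "\<dots> \<le> 3 * (L\<^sup>2 / 4 + M\<^sup>2) * decay (3 / 2) s"
      using True by (intro min_sqrt_bound_le_decay) auto
    finally show ?thesis .
  next
    case False
    then show ?thesis
      using decay_pos[of "3 / 2" s] by (simp add: KL_kernel_def)
  qed
qed

theorem proposition6:
  fixes \<omega> :: real and c :: "real \<Rightarrow> real" and E :: "nat \<Rightarrow> complex"
  assumes "\<omega> > 0"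
    and "\<forall>k x. ((deriv ^^ k) c) differentiable (at x)"
    and "\<forall>t. c (t + 2 * pi / \<omega>) = c t"
    and "\<forall>t. (\<lambda>n. 2 * (E (Suc n) / (\<i> * of_nat (Suc n) * of_real \<omega>)^2
                          * exp (\<i> * of_nat (Suc n) * of_real \<omega> * of_real t)
                      + cnj (E (Suc n)) / (- \<i> * of_nat (Suc n) * of_real \<omega>)^2
                          * exp (- \<i> * of_nat (Suc n) * of_real \<omega> * of_real t)))
              sums (of_real (c t))"
  shows "(\<forall>\<sigma>. Im \<sigma> \<ge> 0 \<longrightarrow> compact_op_L2 (2 * pi / \<omega>) (KL c \<sigma>))
       \<and> op_holomorphic_on (2 * pi / \<omega>) (KL c) {\<sigma>. Im \<sigma> > 0}
       \<and> op_continuous_on (2 * pi / \<omega>) (KL c) {\<sigma>. Im \<sigma> \<ge> 0}"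
proof -
  define T where "T = 2 * pi / \<omega>"
  have T: "0 < T"
    unfolding T_def using assms(1) by simp
  have deriv_c: "(c has_real_derivative deriv c x) (at x)" for x
    using assms(2)[rule_format, of 0 x] by (simp add: DERIV_deriv_iff_real_differentiable)
  have cont_c: "continuous_on UNIV c" and cont_deriv: "continuous_on UNIV (deriv c)"
    using assms(2)[rule_format, of 0] assms(2)[rule_format, of 1]
    by (auto intro!: continuous_at_imp_continuous_on differentiable_imp_continuous_within)
  obtain L where L: "\<And>t s. 0 < s \<Longrightarrow> \<bar>c t - c (t - s)\<bar> \<le> L * s"
    using periodic_C1_lipschitz[OF deriv_c cont_deriv assms(3)[folded T_def] T] by blast
  obtain M where M: "\<And>t. \<bar>c t\<bar> \<le> M"
    using periodic_continuous_bounded[OF cont_c assms(3)[folded T_def] T] by auto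
  interpret causal_kernel T "3 / 2" "3 * (L\<^sup>2 / 4 + M\<^sup>2)" "KL_kernel c"
    using causal_kernel_KL_kernel[OF T cont_c assms(3)[folded T_def] L M] .
  show ?thesis
    unfolding KL_eq_laplace_op T_def[symmetric]
    using compact_laplace_op laplace_op_holomorphic laplace_op_continuous by blast
qed

end
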